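(* (a) There is an SSSCG with one follower, in which the leader's cost functions are weakly monotonic but the follower's are not, whose unique OSE and unique PSE prescribe the leader a mixed strategy: $R=\{r_1,r_2\}$, $c_{r_k,\ell}(1)=1$, $c_{r_k,\ell}(2)=2$, $c_{r_k,f}(1)=2$, $c_{r_k,f}(2)=1$ for $k=1,2$; the leader's equilibrium strategy is $\sigma_\ell(r_1)=\sigma_\ell(r_2)=\tfrac12$. (b) There is an SSSCG with one follower, in which the follower's cost functions are weakly monotonic but the leader's are not, whose unique OSE and unique PSE prescribe the leader a mixed strategy: $R=\{r_1,r_2\}$, $c_{r_k,\ell}(1)=2$, $c_{r_k,\ell}(2)=0$, $c_{r_k,f}(1)=1$, $c_{r_k,f}(2)=2$ for $k=1,2$; the leader's equilibrium strategy is $\sigma_\ell(r_1)=\sigma_\ell(r_2)=\tfrac12$.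
   Context: A symmetric Stackelberg singleton congestion game (SSSCG) consists of a leader $\ell$, a finite set $F$ of followers, a finite set $R$ of resources which every player may select (each player selects exactly one), and cost functions $c_{i,\ell},c_{i,f}:\mathbb N\to\mathbb Q$ ($i\in R$) for the leader and the followers with $c_{i,\ell}(0)=c_{i,f}(0)=0$. The leader commits to a probability distribution $\sigma_\ell$ on $R$ (pure if it puts probability $1$ on one resource). A followers' configuration is $\nu\in\mathbb N^R$ with $\sum_i\nu_i=|F|$. The followers' expected cost of resource $i$ with $x$ followers is $c^{\sigma_\ell}_{i,f}(x)=\sigma_\ell(i)c_{i,f}(x+1)+(1-\sigma_\ell(i))c_{i,f}(x)$; the leader's cost is $c_\ell^{(\sigma_\ell,\nu)}=\sum_{i\in R}\sigma_\ell(i)c_{i,\ell}(\nu_i+1)$. $\nu$ is a Nash equilibrium for $\sigma_\ell$ ($\nu\in E^{\sigma_\ell}$) if for all $i$ with $\nu_i>0$ and all $j\ne i$, $c^{\sigma_\ell}_{i,f}(\nu_i)\le c^{\sigma_\ell}_{j,f}(\nu_j+1)$. An OSE is a pair $(\sigma_\ell,\nu)$ with $\nu\in E^{\sigma_\ell}$ minimizing $c_\ell^{(\sigma_\ell,\nu)}$ over all such pairs. A PSE is a pair $(\sigma_\ell,\nu)$ such that $\sigma_\ell$ attains the minimum over all leader strategies of $\max_{\nu'\in E^{\sigma_\ell}}c_\ell^{(\sigma_\ell,\nu')}$ and $\nu\in E^{\sigma_\ell}$ attains that maximum. Weakly monotonic: $c(x)\le c(x+1)$ for all $x$. *)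

theory Defs
  imports Complex_Main
begin

text \<open>R : set of resources, n : number of followers (|F|),
  cl i / cf i : cost functions of the leader / the followers on resource i
  (rational valued, c(0) = 0).\<close>

definition sscg :: "'r set \<Rightarrow> ('r \<Rightarrow> nat \<Rightarrow> rat) \<Rightarrow> ('r \<Rightarrow> nat \<Rightarrow> rat) \<Rightarrow> bool" where
  "sscg R cl cf \<longleftrightarrow> finite R \<and> R \<noteq> {} \<and> (\<forall>i\<in>R. cl i 0 = 0 \<and> cf i 0 = 0)"

definition leader_strategy :: "'r set \<Rightarrow> ('r \<Rightarrow> real) \<Rightarrow> bool" where
  "leader_strategy R \<sigma> \<longleftrightarrow> (\<forall>i\<in>R. 0 \<le> \<sigma> i) \<and> (\<forall>i. i \<notin> R \<longrightarrow> \<sigma> i = 0) \<and> (\<Sum>i\<in>R. \<sigma> i) = 1"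

definition pure_strategy :: "'r set \<Rightarrow> ('r \<Rightarrow> real) \<Rightarrow> bool" where
  "pure_strategy R \<sigma> \<longleftrightarrow> (\<exists>i\<in>R. \<sigma> i = 1)"

definition followers_config :: "'r set \<Rightarrow> nat \<Rightarrow> ('r \<Rightarrow> nat) \<Rightarrow> bool" where
  "followers_config R n \<nu> \<longleftrightarrow> (\<forall>i. i \<notin> R \<longrightarrow> \<nu> i = 0) \<and> (\<Sum>i\<in>R. \<nu> i) = n"

definition fcost :: "('r \<Rightarrow> real) \<Rightarrow> ('r \<Rightarrow> nat \<Rightarrow> rat) \<Rightarrow> 'r \<Rightarrow> nat \<Rightarrow> real" where
  "fcost \<sigma> cf i x = \<sigma> i * of_rat (cf i (x + 1)) + (1 - \<sigma> i) * of_rat (cf i x)"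

definition lcost :: "'r set \<Rightarrow> ('r \<Rightarrow> nat \<Rightarrow> rat) \<Rightarrow> ('r \<Rightarrow> real) \<Rightarrow> ('r \<Rightarrow> nat) \<Rightarrow> real" where
  "lcost R cl \<sigma> \<nu> = (\<Sum>i\<in>R. \<sigma> i * of_rat (cl i (\<nu> i + 1)))"

definition is_NE :: "'r set \<Rightarrow> nat \<Rightarrow> ('r \<Rightarrow> nat \<Rightarrow> rat) \<Rightarrow> ('r \<Rightarrow> real) \<Rightarrow> ('r \<Rightarrow> nat) \<Rightarrow> bool" where
  "is_NE R n cf \<sigma> \<nu> \<longleftrightarrow> followers_config R n \<nu> \<and>
     (\<forall>i\<in>R. \<nu> i > 0 \<longrightarrow> (\<forall>j\<in>R. j \<noteq> i \<longrightarrow> fcost \<sigma> cf i (\<nu> i) \<le> fcost \<sigma> cf j (\<nu> j + 1)))"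

definition is_OSE :: "'r set \<Rightarrow> nat \<Rightarrow> ('r \<Rightarrow> nat \<Rightarrow> rat) \<Rightarrow> ('r \<Rightarrow> nat \<Rightarrow> rat) \<Rightarrow> ('r \<Rightarrow> real) \<Rightarrow> ('r \<Rightarrow> nat) \<Rightarrow> bool" where
  "is_OSE R n cl cf \<sigma> \<nu> \<longleftrightarrow> leader_strategy R \<sigma> \<and> is_NE R n cf \<sigma> \<nu> \<and>
     (\<forall>\<sigma>' \<nu>'. leader_strategy R \<sigma>' \<and> is_NE R n cf \<sigma>' \<nu>' \<longrightarrow> lcost R cl \<sigma> \<nu> \<le> lcost R cl \<sigma>' \<nu>')"

definition is_PSE :: "'r set \<Rightarrow> nat \<Rightarrow> ('r \<Rightarrow> nat \<Rightarrow> rat) \<Rightarrow> ('r \<Rightarrow> nat \<Rightarrow> rat) \<Rightarrow> ('r \<Rightarrow> real) \<Rightarrow> ('r \<Rightarrow> nat) \<Rightarrow> bool" where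
  "is_PSE R n cl cf \<sigma> \<nu> \<longleftrightarrow> leader_strategy R \<sigma> \<and> is_NE R n cf \<sigma> \<nu> \<and>
     (\<forall>\<nu>'. is_NE R n cf \<sigma> \<nu>' \<longrightarrow> lcost R cl \<sigma> \<nu>' \<le> lcost R cl \<sigma> \<nu>) \<and>
     (\<forall>\<sigma>'. leader_strategy R \<sigma>' \<longrightarrow> (\<exists>\<nu>'. is_NE R n cf \<sigma>' \<nu>' \<and> lcost R cl \<sigma> \<nu> \<le> lcost R cl \<sigma>' \<nu>'))"

definition weakly_monotonic :: "(nat \<Rightarrow> rat) \<Rightarrow> bool" where
  "weakly_monotonic c \<longleftrightarrow> (\<forall>x. c x \<le> c (x + 1))"

text \<open>The two example games. Resources r1 = 0, r2 = 1 (type nat); one follower.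
  Only the values at loads 0,1,2 matter (one leader, one follower); beyond
  load 2 the costs are extended constantly.\<close>

definition ex_R :: "nat set" where "ex_R = {0, 1}"

definition cl_a :: "nat \<Rightarrow> nat \<Rightarrow> rat" where
  "cl_a i x = (if x = 0 then 0 else if x = 1 then 1 else 2)"
definition cf_a :: "nat \<Rightarrow> nat \<Rightarrow> rat" where
  "cf_a i x = (if x = 0 then 0 else if x = 1 then 2 else 1)"
definition cl_b :: "nat \<Rightarrow> nat \<Rightarrow> rat" where
  "cl_b i x = (if x = 0 then 0 else if x = 1 then 2 else 0)"
definition cf_b :: "nat \<Rightarrow> nat \<Rightarrow> rat" where
  "cf_b i x = (if x = 0 then 0 else if x = 1 then 1 else 2)"

definition half_strategy :: "nat \<Rightarrow> real" where
  "half_strategy i = (if i \<in> ex_R then 1/2 else 0)"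

end

theory Submission imports Defs begin

text \<open>In both games the single follower's best response is dictated by the leader's mixed
  strategy: in (a) it joins the resource the leader is more likely to use, in (b) the less likely
  one. Either way the leader's cost grows with the larger of \<open>\<sigma>(r\<^sub>1), \<sigma>(r\<^sub>2)\<close>
  (it is \<open>1 + max\<close> in (a) and \<open>2 max\<close> in (b)), so it is minimised exactly by the uniform
  strategy, all of whose equilibria cost the same. A lower bound on the leader's equilibrium
  cost that is attained by every equilibrium of one strategy and by no other strategy pins down
  both the optimistic and the pessimistic Stackelberg strategy.\<close>

lemma unique_OSE_PSE_if_tight_lower_bound:
  assumes NE_exists: "\<And>\<sigma>. leader_strategy R \<sigma> \<Longrightarrow> \<exists>\<nu>. is_NE R n cf \<sigma> \<nu>"
    and lower_bound: "\<And>\<sigma> \<nu>. leader_strategy R \<sigma> \<Longrightarrow> is_NE R n cf \<sigma> \<nu> \<Longrightarrow> v \<le> lcost R cl \<sigma> \<nu>"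
    and bound_tight: "\<And>\<sigma> \<nu>. leader_strategy R \<sigma> \<Longrightarrow> is_NE R n cf \<sigma> \<nu> \<Longrightarrow> lcost R cl \<sigma> \<nu> \<le> v
                        \<Longrightarrow> \<sigma> = \<sigma>\<^sub>0"
    and strategy: "leader_strategy R \<sigma>\<^sub>0"
    and attained: "\<And>\<nu>. is_NE R n cf \<sigma>\<^sub>0 \<nu> \<Longrightarrow> lcost R cl \<sigma>\<^sub>0 \<nu> = v"
  shows "(\<exists>\<nu>. is_OSE R n cl cf \<sigma>\<^sub>0 \<nu>) \<and> (\<forall>\<sigma> \<nu>. is_OSE R n cl cf \<sigma> \<nu> \<longrightarrow> \<sigma> = \<sigma>\<^sub>0) \<and>
         (\<exists>\<nu>. is_PSE R n cl cf \<sigma>\<^sub>0 \<nu>) \<and> (\<forall>\<sigma> \<nu>. is_PSE R n cl cf \<sigma> \<nu> \<longrightarrow> \<sigma> = \<sigma>\<^sub>0)"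
proof (intro conjI allI impI)
  obtain \<nu>\<^sub>0 where NE\<^sub>0: "is_NE R n cf \<sigma>\<^sub>0 \<nu>\<^sub>0"
    using NE_exists strategy by blast
  have cost\<^sub>0: "lcost R cl \<sigma>\<^sub>0 \<nu>\<^sub>0 = v"
    using attained NE\<^sub>0 .
  show "\<exists>\<nu>. is_OSE R n cl cf \<sigma>\<^sub>0 \<nu>"
    using strategy NE\<^sub>0 cost\<^sub>0 lower_bound unfolding is_OSE_def by metis
  show "\<exists>\<nu>. is_PSE R n cl cf \<sigma>\<^sub>0 \<nu>"
    using strategy NE\<^sub>0 cost\<^sub>0 attained lower_bound NE_exists unfolding is_PSE_def by (metis order_refl)
  fix \<sigma> \<nu>
  show "\<sigma> = \<sigma>\<^sub>0" if "is_OSE R n cl cf \<sigma> \<nu>"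
    using that strategy NE\<^sub>0 cost\<^sub>0 bound_tight unfolding is_OSE_def by metis
  show "\<sigma> = \<sigma>\<^sub>0" if PSE: "is_PSE R n cl cf \<sigma> \<nu>"
  proof -
    obtain \<nu>' where "is_NE R n cf \<sigma>\<^sub>0 \<nu>'" "lcost R cl \<sigma> \<nu> \<le> lcost R cl \<sigma>\<^sub>0 \<nu>'"
      using PSE strategy unfolding is_PSE_def by blast
    then show ?thesis
      using PSE attained bound_tight unfolding is_PSE_def by metis
  qed
qed

definition follower_on :: "'r \<Rightarrow> 'r \<Rightarrow> nat" where
  "follower_on i = (\<lambda>j. if j = i then 1 else 0)"

lemma followers_config_one_iff:
  assumes "finite R"
  shows "followers_config R 1 \<nu> \<longleftrightarrow> (\<exists>i\<in>R. \<nu> = follower_on i)"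
proof
  assume \<nu>: "followers_config R 1 \<nu>"
  then obtain i where "i \<in> R" "\<nu> i = 1" "\<forall>j\<in>R. i \<noteq> j \<longrightarrow> \<nu> j = 0"
    using assms sum_eq_1_iff[of R \<nu>] unfolding followers_config_def by blast
  then have "\<nu> = follower_on i"
    using \<nu> unfolding followers_config_def follower_on_def by fastforce
  then show "\<exists>i\<in>R. \<nu> = follower_on i"
    using \<open>i \<in> R\<close> by blast
next
  assume "\<exists>i\<in>R. \<nu> = follower_on i"
  then show "followers_config R 1 \<nu>"
    using assms by (auto simp: followers_config_def follower_on_def)
qed

lemma is_NE_follower_on_iff:
  "is_NE R 1 cf \<sigma> (follower_on i) \<longleftrightarrow>
     followers_config R 1 (follower_on i) \<and> (\<forall>j\<in>R. j \<noteq> i \<longrightarrow> fcost \<sigma> cf i 1 \<le> fcost \<sigma> cf j 1)"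
  by (auto simp: is_NE_def follower_on_def followers_config_def)

lemma is_NE_one_follower_iff:
  assumes "finite R"
  shows "is_NE R 1 cf \<sigma> \<nu> \<longleftrightarrow>
           (\<exists>i\<in>R. \<nu> = follower_on i \<and> (\<forall>j\<in>R. j \<noteq> i \<longrightarrow> fcost \<sigma> cf i 1 \<le> fcost \<sigma> cf j 1))"
  using followers_config_one_iff[OF assms] is_NE_follower_on_iff
  by (metis is_NE_def)

lemma lcost_follower_on:
  assumes "finite R" "i \<in> R"
  shows "lcost R cl \<sigma> (follower_on i) = \<sigma> i * of_rat (cl i 2) + (\<Sum>j\<in>R - {i}. \<sigma> j * of_rat (cl j 1))"
proof -
  have "lcost R cl \<sigma> (follower_on i) = \<sigma> i * of_rat (cl i 2) + (\<Sum>j\<in>R - {i}. \<sigma> j * of_rat (cl j (follower_on i j + 1)))"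
    using assms by (simp add: lcost_def sum.remove follower_on_def numeral_2_eq_2)
  also have "(\<Sum>j\<in>R - {i}. \<sigma> j * of_rat (cl j (follower_on i j + 1))) = (\<Sum>j\<in>R - {i}. \<sigma> j * of_rat (cl j 1))"
    by (rule sum.cong) (auto simp: follower_on_def)
  finally show ?thesis .
qed

text \<open>The resources of the examples are \<open>0\<close> and \<open>1\<close>, so the other resource of \<open>i\<close> is \<open>1 - i\<close>.\<close>

lemma finite_ex_R: "finite ex_R"
  by (simp add: ex_R_def)

lemma other_resource: "i \<in> ex_R \<Longrightarrow> ex_R - {i} = {1 - i}"
  by (auto simp: ex_R_def)

lemma one_minus_in_ex_R: "1 - i \<in> ex_R"
  by (cases i) (simp_all add: ex_R_def)

lemma leader_strategy_ex_R_sum: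
  "leader_strategy ex_R \<sigma> \<Longrightarrow> i \<in> ex_R \<Longrightarrow> \<sigma> i + \<sigma> (1 - i) = 1"
  by (auto simp: leader_strategy_def ex_R_def)

lemma half_strategy_if_half:
  assumes "leader_strategy ex_R \<sigma>" "i \<in> ex_R" "\<sigma> i = 1/2"
  shows "\<sigma> = half_strategy"
proof
  fix j
  show "\<sigma> j = half_strategy j"
    using assms leader_strategy_ex_R_sum[OF assms(1,2)]
    by (cases "j \<in> ex_R") (auto simp: leader_strategy_def half_strategy_def ex_R_def)
qed

lemma half_strategy_leader_strategy: "leader_strategy ex_R half_strategy"
  by (simp add: leader_strategy_def half_strategy_def ex_R_def)

lemma half_strategy_values: "i \<in> ex_R \<Longrightarrow> half_strategy i = 1/2"
  by (simp add: half_strategy_def)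

lemma is_NE_two_resources_iff:
  "is_NE ex_R 1 cf \<sigma> \<nu> \<longleftrightarrow>
     (\<exists>i\<in>ex_R. \<nu> = follower_on i \<and> fcost \<sigma> cf i 1 \<le> fcost \<sigma> cf (1 - i) 1)"
proof -
  have "is_NE ex_R 1 cf \<sigma> \<nu> \<longleftrightarrow>
          (\<exists>i\<in>ex_R. \<nu> = follower_on i \<and> (\<forall>j\<in>ex_R. j \<noteq> i \<longrightarrow> fcost \<sigma> cf i 1 \<le> fcost \<sigma> cf j 1))"
    using finite_ex_R by (rule is_NE_one_follower_iff)
  then show ?thesis
    by (auto simp: ex_R_def)
qed

lemma lcost_two_resources:
  "i \<in> ex_R \<Longrightarrow>
     lcost ex_R cl \<sigma> (follower_on i) = \<sigma> i * of_rat (cl i 2) + \<sigma> (1 - i) * of_rat (cl (1 - i) 1)"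
  by (simp add: lcost_follower_on finite_ex_R other_resource)

lemma is_NE_cf_a_iff: "is_NE ex_R 1 cf_a \<sigma> \<nu> \<longleftrightarrow> (\<exists>i\<in>ex_R. \<nu> = follower_on i \<and> \<sigma> (1 - i) \<le> \<sigma> i)"
  unfolding is_NE_two_resources_iff by (simp add: fcost_def cf_a_def)

lemma lcost_cl_a:
  "leader_strategy ex_R \<sigma> \<Longrightarrow> i \<in> ex_R \<Longrightarrow> lcost ex_R cl_a \<sigma> (follower_on i) = 1 + \<sigma> i"
  using leader_strategy_ex_R_sum[of \<sigma> i] by (simp add: lcost_two_resources cl_a_def)

lemma is_NE_cf_b_iff: "is_NE ex_R 1 cf_b \<sigma> \<nu> \<longleftrightarrow> (\<exists>i\<in>ex_R. \<nu> = follower_on i \<and> \<sigma> i \<le> \<sigma> (1 - i))"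
  unfolding is_NE_two_resources_iff by (simp add: fcost_def cf_b_def)

lemma lcost_cl_b: "i \<in> ex_R \<Longrightarrow> lcost ex_R cl_b \<sigma> (follower_on i) = 2 * \<sigma> (1 - i)"
  by (simp add: lcost_two_resources cl_b_def)
lemma stackelberg_game_a:
  "(\<exists>\<nu>. is_OSE ex_R 1 cl_a cf_a half_strategy \<nu>) \<and>
   (\<forall>\<sigma> \<nu>. is_OSE ex_R 1 cl_a cf_a \<sigma> \<nu> \<longrightarrow> \<sigma> = half_strategy) \<and>
   (\<exists>\<nu>. is_PSE ex_R 1 cl_a cf_a half_strategy \<nu>) \<and>
   (\<forall>\<sigma> \<nu>. is_PSE ex_R 1 cl_a cf_a \<sigma> \<nu> \<longrightarrow> \<sigma> = half_strategy)"
proof (rule unique_OSE_PSE_if_tight_lower_bound[where v = "3/2"])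
  fix \<sigma> assume "leader_strategy ex_R \<sigma>"
  show "\<exists>\<nu>. is_NE ex_R 1 cf_a \<sigma> \<nu>"
    unfolding is_NE_cf_a_iff by (cases "\<sigma> 1 \<le> \<sigma> 0") (auto simp: ex_R_def)
next
  fix \<sigma> \<nu> assume \<sigma>: "leader_strategy ex_R \<sigma>" and "is_NE ex_R 1 cf_a \<sigma> \<nu>"
  then obtain i where i: "i \<in> ex_R" "\<nu> = follower_on i" "\<sigma> (1 - i) \<le> \<sigma> i"
    unfolding is_NE_cf_a_iff by blast
  have cost: "lcost ex_R cl_a \<sigma> \<nu> = 1 + \<sigma> i"
    using lcost_cl_a \<sigma> i by simp
  have sum: "\<sigma> i + \<sigma> (1 - i) = 1"
    using leader_strategy_ex_R_sum \<sigma> i(1) .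
  show "3/2 \<le> lcost ex_R cl_a \<sigma> \<nu>"
    using cost sum i(3) by simp
  show "\<sigma> = half_strategy" if "lcost ex_R cl_a \<sigma> \<nu> \<le> 3/2"
    using that cost sum i(3) half_strategy_if_half[OF \<sigma> i(1)] by simp
next
  show "leader_strategy ex_R half_strategy"
    by (rule half_strategy_leader_strategy)
next
  fix \<nu> assume "is_NE ex_R 1 cf_a half_strategy \<nu>"
  then show "lcost ex_R cl_a half_strategy \<nu> = 3/2"
    unfolding is_NE_cf_a_iff
    using lcost_cl_a half_strategy_leader_strategy half_strategy_values by auto
qed

lemma stackelberg_game_b:
  "(\<exists>\<nu>. is_OSE ex_R 1 cl_b cf_b half_strategy \<nu>) \<and>
   (\<forall>\<sigma> \<nu>. is_OSE ex_R 1 cl_b cf_b \<sigma> \<nu> \<longrightarrow> \<sigma> = half_strategy) \<and>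
   (\<exists>\<nu>. is_PSE ex_R 1 cl_b cf_b half_strategy \<nu>) \<and>
   (\<forall>\<sigma> \<nu>. is_PSE ex_R 1 cl_b cf_b \<sigma> \<nu> \<longrightarrow> \<sigma> = half_strategy)"
proof (rule unique_OSE_PSE_if_tight_lower_bound[where v = 1])
  fix \<sigma> assume "leader_strategy ex_R \<sigma>"
  show "\<exists>\<nu>. is_NE ex_R 1 cf_b \<sigma> \<nu>"
    unfolding is_NE_cf_b_iff by (cases "\<sigma> 0 \<le> \<sigma> 1") (auto simp: ex_R_def)
next
  fix \<sigma> \<nu> assume \<sigma>: "leader_strategy ex_R \<sigma>" and "is_NE ex_R 1 cf_b \<sigma> \<nu>"
  then obtain i where i: "i \<in> ex_R" "\<nu> = follower_on i" "\<sigma> i \<le> \<sigma> (1 - i)"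
    unfolding is_NE_cf_b_iff by blast
  have cost: "lcost ex_R cl_b \<sigma> \<nu> = 2 * \<sigma> (1 - i)"
    using lcost_cl_b i by simp
  have sum: "\<sigma> i + \<sigma> (1 - i) = 1"
    using leader_strategy_ex_R_sum \<sigma> i(1) .
  show "1 \<le> lcost ex_R cl_b \<sigma> \<nu>"
    using cost sum i(3) by simp
  show "\<sigma> = half_strategy" if "lcost ex_R cl_b \<sigma> \<nu> \<le> 1"
    using that cost sum i(3) half_strategy_if_half[OF \<sigma> i(1)] by simp
next
  show "leader_strategy ex_R half_strategy"
    by (rule half_strategy_leader_strategy)
next
  fix \<nu> assume "is_NE ex_R 1 cf_b half_strategy \<nu>"
  then obtain i where "i \<in> ex_R" "\<nu> = follower_on i"
    unfolding is_NE_cf_b_iff by blast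
  moreover have "half_strategy (1 - i) = 1/2"
    using one_minus_in_ex_R by (rule half_strategy_values)
  ultimately show "lcost ex_R cl_b half_strategy \<nu> = 1"
    by (simp add: lcost_cl_b)
qed

theorem mainTheorem18:
  shows
  "(sscg ex_R cl_a cf_a \<and>
    (\<forall>i\<in>ex_R. weakly_monotonic (cl_a i)) \<and> \<not> (\<forall>i\<in>ex_R. weakly_monotonic (cf_a i)) \<and>
    \<not> pure_strategy ex_R half_strategy \<and>
    (\<exists>\<nu>. is_OSE ex_R 1 cl_a cf_a half_strategy \<nu>) \<and>
    (\<forall>\<sigma> \<nu>. is_OSE ex_R 1 cl_a cf_a \<sigma> \<nu> \<longrightarrow> \<sigma> = half_strategy) \<and>
    (\<exists>\<nu>. is_PSE ex_R 1 cl_a cf_a half_strategy \<nu>) \<and>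
    (\<forall>\<sigma> \<nu>. is_PSE ex_R 1 cl_a cf_a \<sigma> \<nu> \<longrightarrow> \<sigma> = half_strategy))
   \<and>
   (sscg ex_R cl_b cf_b \<and>
    (\<forall>i\<in>ex_R. weakly_monotonic (cf_b i)) \<and> \<not> (\<forall>i\<in>ex_R. weakly_monotonic (cl_b i)) \<and>
    \<not> pure_strategy ex_R half_strategy \<and>
    (\<exists>\<nu>. is_OSE ex_R 1 cl_b cf_b half_strategy \<nu>) \<and>
    (\<forall>\<sigma> \<nu>. is_OSE ex_R 1 cl_b cf_b \<sigma> \<nu> \<longrightarrow> \<sigma> = half_strategy) \<and>
    (\<exists>\<nu>. is_PSE ex_R 1 cl_b cf_b half_strategy \<nu>) \<and>
    (\<forall>\<sigma> \<nu>. is_PSE ex_R 1 cl_b cf_b \<sigma> \<nu> \<longrightarrow> \<sigma> = half_strategy))"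
proof -
  have "sscg ex_R cl_a cf_a" "sscg ex_R cl_b cf_b"
    by (auto simp: sscg_def ex_R_def cl_a_def cf_a_def cl_b_def cf_b_def)
  moreover have "\<forall>i\<in>ex_R. weakly_monotonic (cl_a i)" "\<forall>i\<in>ex_R. weakly_monotonic (cf_b i)"
    by (auto simp: weakly_monotonic_def cl_a_def cf_b_def)
  moreover have "\<not> weakly_monotonic (cf_a 0)" "\<not> weakly_monotonic (cl_b 0)"
    by (auto simp: weakly_monotonic_def cf_a_def cl_b_def intro!: exI[of _ 1])
  moreover have "\<not> pure_strategy ex_R half_strategy"
    by (simp add: pure_strategy_def half_strategy_values)
  ultimately show ?thesis
    using stackelberg_game_a stackelberg_game_b by (auto simp: ex_R_def)
qed

end
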